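(* On $\mathcal{P}(\mathbb{R}^{2m},\mathbb{C})\cap\ker(\Delta_x,\Delta_u)$, equipped with the Fischer inner product, the adjoints of the operators $C,A,S_u,S_x$ are $C^\dagger=A$, $A^\dagger=C$, $S_u^\dagger=S_x$, $S_x^\dagger=S_u$; i.e. for all $P,Q\in\mathcal{P}(\mathbb{R}^{2m},\mathbb{C})\cap\ker(\Delta_x,\Delta_u)$: $[CP,Q]_F=[P,AQ]_F$, $[AP,Q]_F=[P,CQ]_F$, $[S_uP,Q]_F=[P,S_xQ]_F$, $[S_xP,Q]_F=[P,S_uQ]_F$.
   Context: Fix an integer $m>4$. For $x,u\in\mathbb{R}^m$ let $\mathcal{P}(\mathbb{R}^{2m},\mathbb{C})$ be the complex polynomials in $(x,u)$ and $\mathcal{P}_{p,q}$ those of bidegree $(p,q)$. The Fischer inner product is $[P,Q]_F=\overline{P}(\partial_x,\partial_u)Q(x,u)\big|_{x=u=0}$, where $\overline{P}(\partial_x,\partial_u)$ is obtained from $P$ by conjugating the coefficients and replacing each $x_j,u_j$ by $\partial_{x_j},\partial_{u_j}$. Write $|x|^2=\sum x_j^2$, $\langle u,x\rangle=\sum u_jx_j$, $\Delta_x=\sum\partial_{x_j}^2$, $\Delta_u=\sum\partial_{u_j}^2$, $\langle\partial_u,\partial_x\rangle=\sum\partial_{u_j}\partial_{x_j}$, $\langle x,\partial_u\rangle=\sum x_j\partial_{u_j}$, $\langle u,\partial_x\rangle=\sum u_j\partial_{x_j}$, $\ker(D_1,\dots,D_r)=\bigcap\ker D_i$. Every $P\in\mathcal{P}_{p,q}$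 is uniquely $\sum_{a,b\ge0}|x|^{2a}|u|^{2b}H'_{p-2a,q-2b}$ with $H'_{p-2a,q-2b}\in\mathcal{P}_{p-2a,q-2b}\cap\ker(\Delta_x,\Delta_u)$; $\pi_{\mathfrak{s}}P:=H'_{p,q}$. On $\ker(\Delta_x,\Delta_u)$: $S_x=\pi_{\mathfrak{s}}\langle x,\partial_u\rangle$, $S_u=\pi_{\mathfrak{s}}\langle u,\partial_x\rangle$, $A=\pi_{\mathfrak{s}}\langle\partial_u,\partial_x\rangle$, $C=\pi_{\mathfrak{s}}\langle u,x\rangle$. *)

theory Defs
  imports Complex_Main "HOL-Library.Poly_Mapping"
begin

text \<open>Variables are indexed by
  the type 'n + 'n: Inl j stands for x_j and Inr j for u_j, where 'n is a finite type
  with m = CARD('n) elements. A monomial is an exponent vector ('n + 'n) =>_0 nat,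
  a polynomial is a finitely supported map from monomials to complex coefficients
  (multiplication = convolution = polynomial multiplication).\<close>

type_synonym 'n mono = "('n + 'n) \<Rightarrow>\<^sub>0 nat"
type_synonym 'n cpoly = "'n mono \<Rightarrow>\<^sub>0 complex"

definition var :: "('n + 'n) \<Rightarrow> 'n cpoly" where
  "var v = Poly_Mapping.single (Poly_Mapping.single v 1) 1"

definition pder :: "('n + 'n) \<Rightarrow> 'n cpoly \<Rightarrow> 'n cpoly" where
  "pder v P = (\<Sum>\<alpha>\<in>Poly_Mapping.keys P. Poly_Mapping.single (\<alpha> - Poly_Mapping.single v (1::nat))
                 (Poly_Mapping.lookup P \<alpha> * of_nat (Poly_Mapping.lookup \<alpha> v)))"

text \<open>The differential operator \<partial>^\<alpha> = \<Prod>_v \<partial>_v^{\<alpha>_v} (the partial derivatives commute).\<close>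
definition dmono :: "'n mono \<Rightarrow> 'n cpoly \<Rightarrow> 'n cpoly" where
  "dmono \<alpha> = Finite_Set.fold (\<lambda>v f. (pder v ^^ Poly_Mapping.lookup \<alpha> v) \<circ> f) id (UNIV :: ('n + 'n) set)"

text \<open>Fischer inner product [P,Q]_F = conj(P)(\<partial>_x,\<partial>_u) Q evaluated at x = u = 0
  (evaluation at 0 = constant coefficient).\<close>
definition fischer :: "'n::finite cpoly \<Rightarrow> 'n cpoly \<Rightarrow> complex" where
  "fischer P Q = (\<Sum>\<alpha>\<in>Poly_Mapping.keys P. cnj (Poly_Mapping.lookup P \<alpha>) * Poly_Mapping.lookup (dmono \<alpha> Q) 0)"

definition lap_x :: "'n::finite cpoly \<Rightarrow> 'n cpoly" where
  "lap_x P = (\<Sum>j\<in>UNIV. pder (Inl j) (pder (Inl j) P))"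

definition lap_u :: "'n::finite cpoly \<Rightarrow> 'n cpoly" where
  "lap_u P = (\<Sum>j\<in>UNIV. pder (Inr j) (pder (Inr j) P))"

definition harmonic2 :: "'n::finite cpoly \<Rightarrow> bool" where
  "harmonic2 P \<longleftrightarrow> lap_x P = 0 \<and> lap_u P = 0"

definition normx2 :: "'n::finite cpoly" where
  "normx2 = (\<Sum>j\<in>UNIV. var (Inl j) ^ 2)"

definition normu2 :: "'n::finite cpoly" where
  "normu2 = (\<Sum>j\<in>UNIV. var (Inr j) ^ 2)"

definition xdeg :: "'n::finite mono \<Rightarrow> nat" where
  "xdeg \<alpha> = (\<Sum>j\<in>UNIV. Poly_Mapping.lookup \<alpha> (Inl j))"

definition udeg :: "'n::finite mono \<Rightarrow> nat" where
  "udeg \<alpha> = (\<Sum>j\<in>UNIV. Poly_Mapping.lookup \<alpha> (Inr j))"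

definition bihom :: "nat \<Rightarrow> nat \<Rightarrow> 'n::finite cpoly \<Rightarrow> bool" where
  "bihom p q P \<longleftrightarrow> (\<forall>\<alpha>\<in>Poly_Mapping.keys P. xdeg \<alpha> = p \<and> udeg \<alpha> = q)"

definition bicomp :: "nat \<Rightarrow> nat \<Rightarrow> 'n::finite cpoly \<Rightarrow> 'n cpoly" where
  "bicomp p q P = (\<Sum>\<alpha>\<in>{\<alpha>\<in>Poly_Mapping.keys P. xdeg \<alpha> = p \<and> udeg \<alpha> = q}. Poly_Mapping.single \<alpha> (Poly_Mapping.lookup P \<alpha>))"

text \<open>For P \<in> \<P>_{p,q}: P = \<Sum>_{a,b} |x|^{2a}|u|^{2b} H'_{p-2a,q-2b} uniquely, with
  H' harmonic and bihomogeneous; \<pi>_s P = H'_{p,q}.\<close>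
definition pis_hom :: "nat \<Rightarrow> nat \<Rightarrow> 'n::finite cpoly \<Rightarrow> 'n cpoly" where
  "pis_hom p q P = (THE H. \<exists>Hf :: nat \<Rightarrow> nat \<Rightarrow> 'n cpoly.
      (\<forall>a\<le>p div 2. \<forall>b\<le>q div 2. bihom (p - 2*a) (q - 2*b) (Hf a b) \<and> harmonic2 (Hf a b)) \<and>
      P = (\<Sum>a\<le>p div 2. \<Sum>b\<le>q div 2. normx2 ^ a * normu2 ^ b * Hf a b) \<and>
      H = Hf 0 0)"

definition pis :: "'n::finite cpoly \<Rightarrow> 'n cpoly" where
  "pis P = (\<Sum>(p,q)\<in>(\<lambda>\<alpha>. (xdeg \<alpha>, udeg \<alpha>)) ` Poly_Mapping.keys P. pis_hom p q (bicomp p q P))"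

definition S_x :: "'n::finite cpoly \<Rightarrow> 'n cpoly" where
  "S_x P = pis (\<Sum>j\<in>UNIV. var (Inl j) * pder (Inr j) P)"

definition S_u :: "'n::finite cpoly \<Rightarrow> 'n cpoly" where
  "S_u P = pis (\<Sum>j\<in>UNIV. var (Inr j) * pder (Inl j) P)"

definition A_op :: "'n::finite cpoly \<Rightarrow> 'n cpoly" where
  "A_op P = pis (\<Sum>j\<in>UNIV. pder (Inr j) (pder (Inl j) P))"

definition C_op :: "'n::finite cpoly \<Rightarrow> 'n cpoly" where
  "C_op P = pis ((\<Sum>j\<in>UNIV. var (Inr j) * var (Inl j)) * P)"

end

(*
  In monomial coordinates the Fischer product is [P,Q] = sum_a cnj(P_a) Q_a a!, a Hermitian
  inner product for which multiplication by a variable is adjoint to differentiation in that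
  variable. Hence |x|^2 S and |u|^2 S are orthogonal to ker(Delta_x, Delta_u), and the Fischer
  decomposition P = sum |x|^(2a) |u|^(2b) H'_(p-2a,q-2b) gives [pi_s P, Q] = [P, Q] for harmonic Q.
  The decomposition exists because, by the same adjointness, the orthogonal complement of
  |x|^2 P_(p-2,q) + |u|^2 P_(p,q-2) in P_(p,q) consists of harmonic polynomials; induction on
  p + q does the rest. Once pi_s can be dropped, the four identities are the adjointness of
  <u,x> and <d_u,d_x>, and of <u,d_x> and <x,d_u>, on all polynomials.
*)

theory Submission
  imports Defs "HOL-Library.FuncSet"
begin

abbreviation lookup :: "('a \<Rightarrow>\<^sub>0 'b::zero) \<Rightarrow> 'a \<Rightarrow> 'b" where
  "lookup \<equiv> Poly_Mapping.lookup"
abbreviation keys :: "('a \<Rightarrow>\<^sub>0 'b::zero) \<Rightarrow> 'a set" where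
  "keys \<equiv> Poly_Mapping.keys"
abbreviation single :: "'a \<Rightarrow> 'b::zero \<Rightarrow> 'a \<Rightarrow>\<^sub>0 'b" where
  "single \<equiv> Poly_Mapping.single"
abbreviation basis :: "'a \<Rightarrow> 'a \<Rightarrow>\<^sub>0 nat" where
  "basis v \<equiv> single v 1"

lemma poly_mapping_expand: "p = (\<Sum>g\<in>keys p. single g (lookup p g))"
  by (rule poly_mapping_eqI) (simp add: lookup_sum lookup_single when_def in_keys_iff)

lemma lookup_single_mult:
  "lookup (single k c * p) b = (\<Sum>g\<in>keys p. if k + g = b then c * lookup p g else 0)"
proof -
  have "single k c * p = (\<Sum>g\<in>keys p. single (k + g) (c * lookup p g))"
    by (subst poly_mapping_expand[of p]) (simp add: sum_distrib_left mult_single)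
  then show ?thesis by (simp add: lookup_sum lookup_single when_def)
qed

lemma lookup_single_mult_add:
  fixes p :: "('a::cancel_comm_monoid_add \<Rightarrow>\<^sub>0 'b::comm_semiring_1)"
  shows "lookup (single k c * p) (k + g) = c * lookup p g"
  by (simp add: lookup_single_mult in_keys_iff)

lemma keys_single_mult:
  fixes p :: "('a::cancel_comm_monoid_add \<Rightarrow>\<^sub>0 'b::comm_semiring_1)"
  shows "keys (single k c * p) \<subseteq> (\<lambda>g. k + g) ` keys p"
  using keys_mult[of "single k c" p] by (auto split: if_splits)

lemma diff_basis_eq_iff:
  assumes "lookup a v \<noteq> 0"
  shows "a - basis v = b \<longleftrightarrow> a = b + basis v"
proof
  assume "a - basis v = b"
  then show "a = b + basis v"
    using assms by (intro poly_mapping_eqI) (auto simp: lookup_minus lookup_add lookup_single when_def)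
qed (intro poly_mapping_eqI, simp add: lookup_add lookup_minus)

lemma lookup_pder: "lookup (pder v P) b = lookup P (b + basis v) * of_nat (lookup b v + 1)"
proof -
  have "lookup (pder v P) b =
        (\<Sum>a\<in>keys P. if a - basis v = b then lookup P a * of_nat (lookup a v) else 0)"
    by (simp add: pder_def lookup_sum lookup_single when_def)
  also have "\<dots> = (\<Sum>a\<in>keys P. if a = b + basis v then lookup P a * of_nat (lookup a v) else 0)"
  proof (intro sum.cong refl)
    fix a
    show "(if a - basis v = b then lookup P a * of_nat (lookup a v) else 0) =
          (if a = b + basis v then lookup P a * of_nat (lookup a v) else 0)"
    proof (cases "lookup a v = 0")
      case True
      then have "a \<noteq> b + basis v" by (auto simp: lookup_add)
      with True show ?thesis by simp
    qed (use diff_basis_eq_iff[of a v b] in simp)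
  qed
  also have "\<dots> = lookup P (b + basis v) * of_nat (lookup b v + 1)"
    by (simp add: in_keys_iff lookup_add)
  finally show ?thesis .
qed

lemma keys_pder: "a \<in> keys (pder v P) \<Longrightarrow> a + basis v \<in> keys P"
  by (auto simp: in_keys_iff lookup_pder)

lemma lookup_pder_pow:
  "lookup ((pder v ^^ k) P) b = lookup P (b + single v k) * of_nat (\<Prod>i<k. lookup b v + Suc i)"
proof (induction k arbitrary: b)
  case (Suc k)
  have shift: "b + basis v + single v k = b + single v (Suc k)"
    by (simp add: single_add[symmetric] add.assoc)
  have prod: "(\<Prod>i<Suc k. lookup b v + Suc i) = (\<Prod>i<k. lookup (b + basis v) v + Suc i) * (lookup b v + 1)"
    unfolding prod.lessThan_Suc_shift by (simp add: lookup_add mult.commute del: prod.lessThan_Suc)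
  have "lookup ((pder v ^^ Suc k) P) b = lookup ((pder v ^^ k) P) (b + basis v) * of_nat (lookup b v + 1)"
    by (simp add: lookup_pder)
  also have "\<dots> = lookup P (b + basis v + single v k) * of_nat (\<Prod>i<k. lookup (b + basis v) v + Suc i)
                   * of_nat (lookup b v + 1)"
    by (simp only: Suc)
  also have "\<dots> = lookup P (b + single v (Suc k)) * of_nat (\<Prod>i<Suc k. lookup b v + Suc i)"
    by (simp only: shift prod of_nat_mult mult.assoc)
  finally show ?case .
qed simp

lemma pder_pow_commute: "(pder v ^^ a) ((pder w ^^ c) P) = (pder w ^^ c) ((pder v ^^ a) P)"
proof (cases "v = w")
  case True
  then show ?thesis by (metis add.commute funpow_add o_apply)
next
  case False
  then show ?thesis
    by (intro poly_mapping_eqI) (simp add: lookup_pder_pow lookup_add lookup_single ac_simps)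
qed

definition pder_pow_step :: "'n mono \<Rightarrow> ('n + 'n) \<Rightarrow> ('n cpoly \<Rightarrow> 'n cpoly) \<Rightarrow> 'n cpoly \<Rightarrow> 'n cpoly" where
  "pder_pow_step \<alpha> v f = (pder v ^^ lookup \<alpha> v) \<circ> f"

lemma comp_fun_commute_pder_pow_step: "comp_fun_commute (pder_pow_step \<alpha>)"
  by unfold_locales (auto simp: pder_pow_step_def fun_eq_iff pder_pow_commute)

lemma lookup_fold_pder_pow_step:
  assumes "finite A"
  shows "lookup (Finite_Set.fold (pder_pow_step \<alpha>) id A P) b =
    lookup P (b + (\<Sum>v\<in>A. single v (lookup \<alpha> v))) * of_nat (\<Prod>v\<in>A. \<Prod>i<lookup \<alpha> v. lookup b v + Suc i)"
  using assms
proof (induction A arbitrary: b rule: finite_induct)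
  case (insert x A)
  let ?F = "Finite_Set.fold (pder_pow_step \<alpha>) id"
  let ?s = "single x (lookup \<alpha> x)"
  have fold_insert: "?F (insert x A) = pder_pow_step \<alpha> x (?F A)"
    using comp_fun_commute_on.fold_insert[OF comp_fun_commute_pder_pow_step[unfolded comp_fun_commute_def']]
      insert.hyps by blast
  have prod: "(\<Prod>v\<in>A. \<Prod>i<lookup \<alpha> v. lookup (b + ?s) v + Suc i) =
      (\<Prod>v\<in>A. \<Prod>i<lookup \<alpha> v. lookup b v + Suc i)"
    using insert.hyps by (intro prod.cong refl) (auto simp: lookup_add lookup_single when_def)
  from fold_insert have "lookup (?F (insert x A) P) b =
      lookup (?F A P) (b + ?s) * of_nat (\<Prod>i<lookup \<alpha> x. lookup b x + Suc i)"
    by (simp add: pder_pow_step_def lookup_pder_pow)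
  also have "\<dots> = lookup P (b + ?s + (\<Sum>v\<in>A. single v (lookup \<alpha> v))) *
      of_nat (\<Prod>v\<in>A. \<Prod>i<lookup \<alpha> v. lookup (b + ?s) v + Suc i) * of_nat (\<Prod>i<lookup \<alpha> x. lookup b x + Suc i)"
    by (simp only: insert.IH)
  also have "\<dots> = lookup P (b + (\<Sum>v\<in>insert x A. single v (lookup \<alpha> v))) *
      of_nat (\<Prod>v\<in>insert x A. \<Prod>i<lookup \<alpha> v. lookup b v + Suc i)"
    by (simp only: prod sum.insert[OF insert.hyps] prod.insert[OF insert.hyps] add.assoc of_nat_mult
        mult.assoc) (simp only: mult.commute)
  finally show ?case .
qed simp

definition mono_fact :: "'n::finite mono \<Rightarrow> nat" where
  "mono_fact \<alpha> = (\<Prod>v\<in>UNIV. fact (lookup \<alpha> v))"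

lemma lookup_dmono_0: "lookup (dmono \<alpha> Q) 0 = lookup Q \<alpha> * of_nat (mono_fact \<alpha>)"
proof -
  have "dmono \<alpha> = Finite_Set.fold (pder_pow_step \<alpha>) id UNIV"
    by (simp add: dmono_def pder_pow_step_def[abs_def])
  moreover have "(\<Sum>v\<in>UNIV. single v (lookup \<alpha> v)) = \<alpha>"
    by (rule poly_mapping_eqI) (simp add: lookup_sum lookup_single when_def)
  moreover have "(\<Prod>i<k. (0::nat) + Suc i) = fact k" for k
    by (simp add: fact_prod_Suc atLeast0LessThan)
  ultimately show ?thesis
    by (simp add: lookup_fold_pder_pow_step mono_fact_def)
qed

section \<open>The Fischer product as a Hermitian inner product\<close>

lemma fischer_coeffs: "fischer P Q = (\<Sum>a\<in>keys P. cnj (lookup P a) * lookup Q a * of_nat (mono_fact a))"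
  by (simp add: fischer_def lookup_dmono_0 mult.assoc)

lemma fischer_coeffs_superset:
  assumes "finite S" "keys P \<subseteq> S"
  shows "fischer P Q = (\<Sum>a\<in>S. cnj (lookup P a) * lookup Q a * of_nat (mono_fact a))"
  unfolding fischer_coeffs
  by (rule sum.mono_neutral_left) (use assms in \<open>auto simp: in_keys_iff\<close>)

lemma lookup_const_mult [simp]: "lookup (single 0 c * P) a = c * lookup (P :: 'n cpoly) a"
  using lookup_single_mult_add[of 0 c P a] by simp

lemma fischer_add_left: "fischer (P1 + P2) Q = fischer P1 Q + fischer P2 Q"
  using keys_add[of P1 P2]
  by (simp add: fischer_coeffs_superset[of "keys P1 \<union> keys P2"] lookup_add algebra_simps sum.distrib)

lemma fischer_add_right: "fischer P (Q1 + Q2) = fischer P Q1 + fischer P Q2"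
  by (simp add: fischer_coeffs lookup_add algebra_simps sum.distrib)

lemma fischer_diff_right: "fischer P (Q1 - Q2) = fischer P Q1 - fischer P Q2"
  by (simp add: fischer_coeffs lookup_minus algebra_simps sum_subtractf)

lemma fischer_const_mult_right: "fischer P (single 0 c * Q) = c * fischer P Q"
  unfolding fischer_coeffs lookup_const_mult by (simp add: sum_distrib_left mult_ac)

lemma fischer_zero_left [simp]: "fischer 0 Q = 0"
  by (simp add: fischer_coeffs)

lemma fischer_zero_right [simp]: "fischer P 0 = 0"
  by (simp add: fischer_coeffs)

lemma fischer_cnj: "fischer P Q = cnj (fischer Q P)"
  by (simp add: fischer_coeffs_superset[of "keys P \<union> keys Q"] algebra_simps)

lemma fischer_diff_left: "fischer (P1 - P2) Q = fischer P1 Q - fischer P2 Q"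
  by (metis fischer_cnj fischer_diff_right complex_cnj_diff)

lemma fischer_const_mult_left: "fischer (single 0 c * P) Q = cnj c * fischer P Q"
  by (metis fischer_cnj fischer_const_mult_right complex_cnj_mult)

lemma fischer_sum_left: "fischer (\<Sum>i\<in>I. P i) Q = (\<Sum>i\<in>I. fischer (P i) Q)"
  by (induction I rule: infinite_finite_induct) (auto simp: fischer_add_left)

lemma fischer_sum_right: "fischer Q (\<Sum>i\<in>I. P i) = (\<Sum>i\<in>I. fischer Q (P i))"
  by (induction I rule: infinite_finite_induct) (auto simp: fischer_add_right)

lemma fischer_monomials_left:
  "fischer P Q = (\<Sum>a\<in>keys P. cnj (lookup P a) * fischer (single a 1) Q)"
  by (simp add: fischer_coeffs mult.assoc)

lemma fischer_self_eq_0_iff: "fischer P P = 0 \<longleftrightarrow> P = 0"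
proof
  assume "fischer P P = 0"
  have "cnj z * z = of_real ((cmod z)\<^sup>2)" for z
    using complex_norm_square[of z] by (simp add: mult.commute)
  then have "fischer P P = of_real (\<Sum>a\<in>keys P. (cmod (lookup P a))\<^sup>2 * real (mono_fact a))"
    unfolding fischer_coeffs of_real_sum by simp
  with \<open>fischer P P = 0\<close> have "(\<Sum>a\<in>keys P. (cmod (lookup P a))\<^sup>2 * real (mono_fact a)) = 0"
    by (metis of_real_eq_0_iff)
  then have "\<forall>a\<in>keys P. (cmod (lookup P a))\<^sup>2 * real (mono_fact a) = 0"
    by (subst (asm) sum_nonneg_eq_0_iff) auto
  moreover have "mono_fact a \<noteq> 0" for a :: "'n::finite mono"
    by (simp add: mono_fact_def)
  ultimately have "lookup P a = 0" if "a \<in> keys P" for a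
    using that by (metis mult_eq_0_iff norm_eq_zero of_nat_eq_0_iff power_eq_0_iff)
  then show "P = 0"
    by (metis in_keys_iff keys_eq_empty equals0I)
qed simp

lemma mono_fact_basis_add: "mono_fact (basis v + g) = (lookup g v + 1) * mono_fact (g :: 'n::finite mono)"
proof -
  have "fact (lookup (basis v + g) w) = (if w = v then lookup g v + 1 else 1) * (fact (lookup g w) :: nat)" for w
    by (simp add: lookup_add lookup_single when_def)
  then show ?thesis
    by (simp add: mono_fact_def prod.distrib)
qed

lemma fischer_var_mult_left: "fischer (var v * P) Q = fischer P (pder v Q)"
proof -
  let ?S = "(\<lambda>g. basis v + g) ` keys P"
  have "keys (var v * P) \<subseteq> ?S"
    unfolding var_def by (rule keys_single_mult)
  then have "fischer (var v * P) Q = (\<Sum>a\<in>?S. cnj (lookup (var v * P) a) * lookup Q a * of_nat (mono_fact a))"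
    by (simp add: fischer_coeffs_superset)
  also have "\<dots> = (\<Sum>g\<in>keys P. cnj (lookup (var v * P) (basis v + g)) * lookup Q (basis v + g)
                                 * of_nat (mono_fact (basis v + g)))"
    by (rule sum.reindex_cong[where l = "\<lambda>g. basis v + g"]) (auto intro: inj_onI)
  also have "\<dots> = (\<Sum>g\<in>keys P. cnj (lookup P g) * lookup (pder v Q) g * of_nat (mono_fact g))"
  proof (intro sum.cong refl)
    fix g
    have "lookup (var v * P) (basis v + g) = lookup P g"
      unfolding var_def using lookup_single_mult_add[of "basis v" 1 P g] by simp
    moreover have "lookup (pder v Q) g = lookup Q (basis v + g) * of_nat (lookup g v + 1)"
      by (simp add: lookup_pder add.commute)
    ultimately show "cnj (lookup (var v * P) (basis v + g)) * lookup Q (basis v + g) * of_nat (mono_fact (basis v + g)) =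
        cnj (lookup P g) * lookup (pder v Q) g * of_nat (mono_fact g)"
      by (simp only: mono_fact_basis_add of_nat_mult mult_ac)
  qed
  also have "\<dots> = fischer P (pder v Q)"
    by (simp add: fischer_coeffs)
  finally show ?thesis .
qed

lemma fischer_pder_right: "fischer P (var v * Q) = fischer (pder v P) Q"
  by (metis fischer_cnj fischer_var_mult_left)

lemma fischer_orthogonal_projection:
  assumes "finite I"
  shows "\<exists>c. \<forall>i\<in>I. fischer (g i) (v - (\<Sum>j\<in>I. single 0 (c j) * g j)) = 0"
  using assms
proof (induction I arbitrary: v rule: finite_induct)
  case (insert i I)
  obtain c where c: "\<forall>j\<in>I. fischer (g j) (v - (\<Sum>j\<in>I. single 0 (c j) * g j)) = 0"
    using insert.IH by blast
  obtain d where d: "\<forall>j\<in>I. fischer (g j) (g i - (\<Sum>j\<in>I. single 0 (d j) * g j)) = 0"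
    using insert.IH by blast
  define r where "r = v - (\<Sum>j\<in>I. single 0 (c j) * g j)"
  define z where "z = g i - (\<Sum>j\<in>I. single 0 (d j) * g j)"
  \<comment> \<open>Gram--Schmidt: correct the projection of v onto g ` I along the part z of g i orthogonal to g ` I.\<close>
  define k where "k = fischer z r / fischer z z"
  define c' where "c' = (\<lambda>j. if j = i then k else c j - k * d j)"
  have residual: "v - (\<Sum>j\<in>insert i I. single 0 (c' j) * g j) = r - single 0 k * z"
  proof (rule poly_mapping_eqI)
    fix a
    have "(\<Sum>j\<in>insert i I. c' j * lookup (g j) a) =
          k * lookup (g i) a + (\<Sum>j\<in>I. (c j - k * d j) * lookup (g j) a)"
      using insert.hyps by (simp add: c'_def) (intro sum.cong refl, auto)
    also have "\<dots> = k * lookup (g i) a + (\<Sum>j\<in>I. c j * lookup (g j) a) - k * (\<Sum>j\<in>I. d j * lookup (g j) a)"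
      by (simp add: algebra_simps sum_subtractf sum_distrib_left)
    finally have "(\<Sum>j\<in>insert i I. c' j * lookup (g j) a) = \<dots>" .
    then show "lookup (v - (\<Sum>j\<in>insert i I. single 0 (c' j) * g j)) a = lookup (r - single 0 k * z) a"
      unfolding r_def z_def lookup_minus lookup_sum lookup_const_mult by (simp add: algebra_simps)
  qed
  have orth_I: "fischer (g j) (r - single 0 k * z) = 0" if "j \<in> I" for j
    using c d that by (simp add: fischer_diff_right fischer_const_mult_right r_def z_def)
  have orth_z: "fischer z (r - single 0 k * z) = 0"
  proof (cases "z = 0")
    case False
    then show ?thesis
      by (simp add: fischer_diff_right fischer_const_mult_right k_def fischer_self_eq_0_iff)
  qed simp
  have "g i = z + (\<Sum>j\<in>I. single 0 (d j) * g j)"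
    by (simp add: z_def)
  then have "fischer (g i) (r - single 0 k * z) = 0"
    by (simp add: fischer_add_left fischer_sum_left fischer_const_mult_left orth_I orth_z)
  with orth_I residual show ?case
    by (intro exI[of _ c']) auto
qed simp

section \<open>Orthogonality to harmonic polynomials\<close>

lemma pder_add: "pder v (P + Q) = pder v P + pder v Q"
  by (rule poly_mapping_eqI) (simp add: lookup_pder lookup_add algebra_simps)

lemma pder_diff: "pder v (P - Q) = pder v P - pder v Q"
  by (rule poly_mapping_eqI) (simp add: lookup_pder lookup_minus algebra_simps)

lemma pder_zero [simp]: "pder v 0 = 0"
  by (rule poly_mapping_eqI) (simp add: lookup_pder)

lemma harmonic2_zero [simp]: "harmonic2 0"
  by (simp add: harmonic2_def lap_x_def lap_u_def)

lemma harmonic2_add: "harmonic2 P \<Longrightarrow> harmonic2 Q \<Longrightarrow> harmonic2 (P + Q)"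
  by (simp add: harmonic2_def lap_x_def lap_u_def pder_add sum.distrib)

lemma harmonic2_diff: "harmonic2 P \<Longrightarrow> harmonic2 Q \<Longrightarrow> harmonic2 (P - Q)"
  by (simp add: harmonic2_def lap_x_def lap_u_def pder_diff sum_subtractf)

lemma fischer_normx2_mult_left: "fischer (normx2 * S) H = fischer S (lap_x H)"
proof -
  have "normx2 * S = (\<Sum>j\<in>UNIV. var (Inl j) * (var (Inl j) * S))"
    by (simp add: normx2_def sum_distrib_right power2_eq_square mult.assoc)
  then show ?thesis
    by (simp add: fischer_sum_left fischer_var_mult_left lap_x_def fischer_sum_right)
qed

lemma fischer_normu2_mult_left: "fischer (normu2 * S) H = fischer S (lap_u H)"
proof -
  have "normu2 * S = (\<Sum>j\<in>UNIV. var (Inr j) * (var (Inr j) * S))"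
    by (simp add: normu2_def sum_distrib_right power2_eq_square mult.assoc)
  then show ?thesis
    by (simp add: fischer_sum_left fischer_var_mult_left lap_u_def fischer_sum_right)
qed

lemma fischer_norm_powers_mult_harmonic:
  assumes "harmonic2 Q" "a > 0 \<or> b > 0"
  shows "fischer (normx2 ^ a * normu2 ^ b * X) Q = 0"
proof (cases a)
  case (Suc a')
  then have "normx2 ^ a * normu2 ^ b * X = normx2 * (normx2 ^ a' * normu2 ^ b * X)"
    by (simp add: mult.assoc)
  with assms(1) show ?thesis
    by (simp add: fischer_normx2_mult_left harmonic2_def)
next
  case 0
  with assms(2) obtain b' where "b = Suc b'"
    using gr0_implies_Suc by blast
  then have "normx2 ^ a * normu2 ^ b * X = normu2 * (normx2 ^ a * normu2 ^ b' * X)"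
    by (simp add: mult_ac)
  with assms(1) show ?thesis
    by (simp add: fischer_normu2_mult_left harmonic2_def)
qed

lemma sum_delta_0_0:
  fixes A B :: nat
  shows "(\<Sum>a\<le>A. \<Sum>b\<le>B. if a = 0 \<and> b = 0 then x else 0) = x"
proof -
  have "(\<Sum>a\<le>A. \<Sum>b\<le>B. if a = 0 \<and> b = 0 then x else 0) = (\<Sum>a\<le>A. if a = 0 then x else 0)"
    by (intro sum.cong refl) (simp add: sum.delta')
  then show ?thesis
    by (simp add: sum.delta')
qed

lemma fischer_norm_powers_sum_harmonic:
  assumes "harmonic2 Q"
  shows "fischer (\<Sum>a\<le>A. \<Sum>b\<le>B. normx2 ^ a * normu2 ^ b * Hf a b) Q = fischer (Hf 0 0) Q"
proof -
  have "fischer (\<Sum>a\<le>A. \<Sum>b\<le>B. normx2 ^ a * normu2 ^ b * Hf a b) Q =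
        (\<Sum>a\<le>A. \<Sum>b\<le>B. if a = 0 \<and> b = 0 then fischer (Hf 0 0) Q else 0)"
    unfolding fischer_sum_left
    by (intro sum.cong refl) (auto simp: fischer_norm_powers_mult_harmonic[OF assms])
  also have "\<dots> = fischer (Hf 0 0) Q"
    by (rule sum_delta_0_0)
  finally show ?thesis .
qed

lemma xdeg_add: "xdeg (a + b) = xdeg a + xdeg b"
  by (simp add: xdeg_def lookup_add sum.distrib)

lemma udeg_add: "udeg (a + b) = udeg a + udeg b"
  by (simp add: udeg_def lookup_add sum.distrib)

lemma xdeg_single [simp]: "xdeg (single (Inl j) k) = k" "xdeg (single (Inr j) k) = 0"
  by (simp_all add: xdeg_def lookup_single when_def)

lemma udeg_single [simp]: "udeg (single (Inl j) k) = 0" "udeg (single (Inr j) k) = k"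
  by (simp_all add: udeg_def lookup_single when_def)

lemma bihom_zero [simp]: "bihom p q 0"
  by (simp add: bihom_def)

lemma bihom_add: "bihom p q P \<Longrightarrow> bihom p q Q \<Longrightarrow> bihom p q (P + Q)"
  using keys_add[of P Q] by (auto simp: bihom_def)

lemma bihom_diff: "bihom p q P \<Longrightarrow> bihom p q Q \<Longrightarrow> bihom p q (P - Q)"
  using keys_diff[of P Q] by (auto simp: bihom_def)

lemma bihom_sum: "(\<And>i. i \<in> I \<Longrightarrow> bihom p q (P i)) \<Longrightarrow> bihom p q (\<Sum>i\<in>I. P i)"
  by (induction I rule: infinite_finite_induct) (auto intro: bihom_add)

lemma bihom_mult: "bihom p q P \<Longrightarrow> bihom p' q' Q \<Longrightarrow> bihom (p + p') (q + q') (P * Q)"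
  using keys_mult[of P Q] by (fastforce simp: bihom_def xdeg_add udeg_add)

lemma bihom_var: "bihom 1 0 (var (Inl j))" "bihom 0 1 (var (Inr j))"
  by (simp_all add: bihom_def var_def)

lemma bihom_normx2: "bihom 2 0 normx2"
  unfolding normx2_def power2_eq_square
  using bihom_mult[OF bihom_var(1) bihom_var(1)] by (intro bihom_sum) (simp add: numeral_2_eq_2)

lemma bihom_normu2: "bihom 0 2 normu2"
  unfolding normu2_def power2_eq_square
  using bihom_mult[OF bihom_var(2) bihom_var(2)] by (intro bihom_sum) (simp add: numeral_2_eq_2)

lemma bihom_normx2_mult:
  assumes "\<forall>a\<in>keys R. xdeg a + 2 = p \<and> udeg a = q"
  shows "bihom p q (normx2 * R)"
proof (cases "2 \<le> p")
  case True
  with assms have "bihom (p - 2) q R"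
    by (auto simp: bihom_def)
  then have "bihom (2 + (p - 2)) (0 + q) (normx2 * R)"
    by (rule bihom_mult[OF bihom_normx2])
  with True show ?thesis
    by (simp only: add_0 le_add_diff_inverse)
next
  case False
  with assms have "keys R = {}"
    by auto
  then show ?thesis
    by simp
qed

lemma bihom_normu2_mult:
  assumes "\<forall>a\<in>keys R. xdeg a = p \<and> udeg a + 2 = q"
  shows "bihom p q (normu2 * R)"
proof (cases "2 \<le> q")
  case True
  with assms have "bihom p (q - 2) R"
    by (auto simp: bihom_def)
  then have "bihom (0 + p) (2 + (q - 2)) (normu2 * R)"
    by (rule bihom_mult[OF bihom_normu2])
  with True show ?thesis
    by (simp only: add_0 le_add_diff_inverse)
next
  case False
  with assms have "keys R = {}"
    by auto
  then show ?thesis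
    by simp
qed

lemma keys_lap_x_bihom:
  assumes "bihom p q P" "a \<in> keys (lap_x P)"
  shows "xdeg a + 2 = p \<and> udeg a = q"
proof -
  have "a \<in> (\<Union>j. keys (pder (Inl j) (pder (Inl j) P)))"
    using assms(2) unfolding lap_x_def by (rule subsetD[OF keys_sum])
  then obtain j where "a \<in> keys (pder (Inl j) (pder (Inl j) P))"
    by blast
  then have "a + basis (Inl j) + basis (Inl j) \<in> keys P"
    by (intro keys_pder)
  with assms(1) have "xdeg (a + basis (Inl j) + basis (Inl j)) = p \<and> udeg (a + basis (Inl j) + basis (Inl j)) = q"
    unfolding bihom_def by blast
  then show ?thesis
    by (simp add: xdeg_add udeg_add)
qed

lemma keys_lap_u_bihom:
  assumes "bihom p q P" "a \<in> keys (lap_u P)"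
  shows "xdeg a = p \<and> udeg a + 2 = q"
proof -
  have "a \<in> (\<Union>j. keys (pder (Inr j) (pder (Inr j) P)))"
    using assms(2) unfolding lap_u_def by (rule subsetD[OF keys_sum])
  then obtain j where "a \<in> keys (pder (Inr j) (pder (Inr j) P))"
    by blast
  then have "a + basis (Inr j) + basis (Inr j) \<in> keys P"
    by (intro keys_pder)
  with assms(1) have "xdeg (a + basis (Inr j) + basis (Inr j)) = p \<and> udeg (a + basis (Inr j) + basis (Inr j)) = q"
    unfolding bihom_def by blast
  then show ?thesis
    by (simp add: xdeg_add udeg_add)
qed

section \<open>The Fischer decomposition\<close>

lemma lap_x_eq_0_if_orthogonal:
  assumes "bihom p q r"
    and "\<And>a. xdeg a + 2 = p \<Longrightarrow> udeg a = q \<Longrightarrow> fischer (normx2 * single a 1) r = 0"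
  shows "lap_x r = 0"
proof -
  have "fischer (single a 1) (lap_x r) = 0" if "a \<in> keys (lap_x r)" for a
    using assms keys_lap_x_bihom[OF assms(1) that] by (simp add: fischer_normx2_mult_left)
  then have "fischer (lap_x r) (lap_x r) = 0"
    by (simp add: fischer_monomials_left[of "lap_x r"])
  then show ?thesis
    by (simp add: fischer_self_eq_0_iff)
qed

lemma lap_u_eq_0_if_orthogonal:
  assumes "bihom p q r"
    and "\<And>a. xdeg a = p \<Longrightarrow> udeg a + 2 = q \<Longrightarrow> fischer (normu2 * single a 1) r = 0"
  shows "lap_u r = 0"
proof -
  have "fischer (single a 1) (lap_u r) = 0" if "a \<in> keys (lap_u r)" for a
    using assms keys_lap_u_bihom[OF assms(1) that] by (simp add: fischer_normu2_mult_left)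
  then have "fischer (lap_u r) (lap_u r) = 0"
    by (simp add: fischer_monomials_left[of "lap_u r"])
  then show ?thesis
    by (simp add: fischer_self_eq_0_iff)
qed

lemma finite_bounded_exponents: "finite {b :: 'a::finite \<Rightarrow>\<^sub>0 nat. \<forall>v. lookup b v \<le> N}"
proof -
  let ?S = "{b :: 'a \<Rightarrow>\<^sub>0 nat. \<forall>v. lookup b v \<le> N}"
  have "lookup ` ?S \<subseteq> Pi\<^sub>E UNIV (\<lambda>_. {..N})"
    by (auto simp: PiE_UNIV_domain)
  then have "finite (lookup ` ?S)"
    by (rule finite_subset) (intro finite_PiE; simp)
  moreover have "inj_on lookup ?S"
    by (rule inj_onI) (simp add: poly_mapping_eqI)
  ultimately show ?thesis
    by (rule finite_imageD)
qed

lemma lookup_le_total_degree: "lookup b v \<le> xdeg b + udeg (b :: 'n::finite mono)"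
proof (cases v)
  case (Inl j)
  have "lookup b (Inl j) \<le> xdeg b"
    unfolding xdeg_def by (rule member_le_sum) auto
  with Inl show ?thesis by simp
next
  case (Inr j)
  have "lookup b (Inr j) \<le> udeg b"
    unfolding udeg_def by (rule member_le_sum) auto
  with Inr show ?thesis by simp
qed

lemma finite_bidegree_monomials: "finite {b :: 'n::finite mono. xdeg b = p \<and> udeg b = q}"
  by (rule finite_subset[OF _ finite_bounded_exponents[of "p + q"]]) (auto intro: lookup_le_total_degree)

text \<open>r is the component of P orthogonal to |x|^2 P_{p-2,q} + |u|^2 P_{p,q-2}; by adjointness this
  orthogonality says exactly that r is harmonic.\<close>

lemma harmonic_projection:
  fixes P :: "'n::finite cpoly"
  assumes "bihom p q P"
  obtains r R1 R2 where "P = r + normx2 * R1 + normu2 * R2" "bihom p q r" "harmonic2 r"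
    "\<forall>a\<in>keys R1. xdeg a + 2 = p \<and> udeg a = q" "\<forall>a\<in>keys R2. xdeg a = p \<and> udeg a + 2 = q"
proof -
  define F1 where "F1 = {b :: 'n mono. xdeg b = p - 2 \<and> udeg b = q \<and> 2 \<le> p}"
  define F2 where "F2 = {b :: 'n mono. xdeg b = p \<and> udeg b = q - 2 \<and> 2 \<le> q}"
  define g :: "'n mono + 'n mono \<Rightarrow> 'n cpoly" where
    "g = case_sum (\<lambda>b. normx2 * single b 1) (\<lambda>b. normu2 * single b 1)"
  have fin: "finite F1" "finite F2"
    unfolding F1_def F2_def by (auto intro: finite_subset[OF _ finite_bidegree_monomials])
  then obtain c where c: "\<forall>i\<in>Inl ` F1 \<union> Inr ` F2. fischer (g i) (P - (\<Sum>j\<in>Inl ` F1 \<union> Inr ` F2. single 0 (c j) * g j)) = 0"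
    using fischer_orthogonal_projection[of "Inl ` F1 \<union> Inr ` F2" g P] by blast
  define R1 where "R1 = (\<Sum>b\<in>F1. single b (c (Inl b)))"
  define R2 where "R2 = (\<Sum>b\<in>F2. single b (c (Inr b)))"
  define r where "r = P - normx2 * R1 - normu2 * R2"
  have const_mult: "single 0 k * (N * single b 1) = N * single b k" for k and N :: "'n cpoly" and b
    by (simp add: mult.left_commute[of "single 0 k" N] mult_single)
  have "(\<Sum>j\<in>Inl ` F1 \<union> Inr ` F2. single 0 (c j) * g j) =
        (\<Sum>j\<in>Inl ` F1. single 0 (c j) * g j) + (\<Sum>j\<in>Inr ` F2. single 0 (c j) * g j)"
    using fin by (intro sum.union_disjoint) auto
  also have "\<dots> = normx2 * R1 + normu2 * R2"
    by (simp add: sum.reindex g_def R1_def R2_def const_mult sum_distrib_left)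
  finally have r_orth: "fischer (g i) r = 0" if "i \<in> Inl ` F1 \<union> Inr ` F2" for i
    using c that by (simp add: r_def diff_diff_eq)
  have keys_R1: "\<forall>a\<in>keys R1. xdeg a + 2 = p \<and> udeg a = q"
    using keys_sum[of "\<lambda>b. single b (c (Inl b))" F1] by (auto simp: R1_def F1_def split: if_splits)
  have keys_R2: "\<forall>a\<in>keys R2. xdeg a = p \<and> udeg a + 2 = q"
    using keys_sum[of "\<lambda>b. single b (c (Inr b))" F2] by (auto simp: R2_def F2_def split: if_splits)
  from keys_R1 keys_R2 have bihom_r: "bihom p q r"
    unfolding r_def using assms by (intro bihom_diff bihom_normx2_mult bihom_normu2_mult)
  have "lap_x r = 0"
  proof (rule lap_x_eq_0_if_orthogonal[OF bihom_r])
    fix a :: "'n mono"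
    assume "xdeg a + 2 = p" "udeg a = q"
    then have "Inl a \<in> Inl ` F1 \<union> Inr ` F2"
      by (auto simp: F1_def)
    from r_orth[OF this] show "fischer (normx2 * single a 1) r = 0"
      by (simp add: g_def)
  qed
  moreover have "lap_u r = 0"
  proof (rule lap_u_eq_0_if_orthogonal[OF bihom_r])
    fix a :: "'n mono"
    assume "xdeg a = p" "udeg a + 2 = q"
    then have "Inr a \<in> Inl ` F1 \<union> Inr ` F2"
      by (auto simp: F2_def)
    from r_orth[OF this] show "fischer (normu2 * single a 1) r = 0"
      by (simp add: g_def)
  qed
  ultimately show ?thesis
    using that[of r R1 R2] bihom_r keys_R1 keys_R2 by (simp add: r_def harmonic2_def)
qed

definition fischer_decomp :: "nat \<Rightarrow> nat \<Rightarrow> 'n::finite cpoly \<Rightarrow> (nat \<Rightarrow> nat \<Rightarrow> 'n cpoly) \<Rightarrow> bool" where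
  "fischer_decomp p q P Hf \<longleftrightarrow>
     (\<forall>a\<le>p div 2. \<forall>b\<le>q div 2. bihom (p - 2*a) (q - 2*b) (Hf a b) \<and> harmonic2 (Hf a b)) \<and>
     P = (\<Sum>a\<le>p div 2. \<Sum>b\<le>q div 2. normx2 ^ a * normu2 ^ b * Hf a b)"

lemma fischer_decomp_zero: "fischer_decomp p q 0 (\<lambda>_ _. 0)"
  by (simp add: fischer_decomp_def)

lemma fischer_decomp_add:
  assumes "fischer_decomp p q P H" "fischer_decomp p q P' H'"
  shows "fischer_decomp p q (P + P') (\<lambda>a b. H a b + H' a b)"
  using assms by (simp add: fischer_decomp_def bihom_add harmonic2_add distrib_left sum.distrib)

lemma fischer_decomp_harmonic:
  assumes "bihom p q r" "harmonic2 r"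
  shows "fischer_decomp p q r (\<lambda>a b. if a = 0 \<and> b = 0 then r else 0)"
proof -
  have "(\<Sum>a\<le>p div 2. \<Sum>b\<le>q div 2. normx2 ^ a * normu2 ^ b * (if a = 0 \<and> b = 0 then r else 0)) =
        (\<Sum>a\<le>p div 2. \<Sum>b\<le>q div 2. if a = 0 \<and> b = 0 then r else 0)"
    by (intro sum.cong refl) simp
  with assms show ?thesis
    by (simp add: fischer_decomp_def sum_delta_0_0)
qed

lemma fischer_decomp_normx2_mult:
  assumes "2 \<le> p" "fischer_decomp (p - 2) q R H"
  shows "fischer_decomp p q (normx2 * R) (\<lambda>a b. if a = 0 then 0 else H (a - 1) b)"
proof -
  have p: "p div 2 = Suc ((p - 2) div 2)"
    using assms(1) by presburger
  show ?thesis
    unfolding fischer_decomp_def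
  proof (rule conjI, intro allI impI)
    fix a b
    assume a: "a \<le> p div 2" and b: "b \<le> q div 2"
    show "bihom (p - 2*a) (q - 2*b) (if a = 0 then 0 else H (a - 1) b) \<and>
          harmonic2 (if a = 0 then 0 else H (a - 1) b)"
    proof (cases a)
      case (Suc a')
      with a p have "a' \<le> (p - 2) div 2" "p - 2 - 2*a' = p - 2*a"
        by auto
      with Suc b assms(2) show ?thesis
        by (simp add: fischer_decomp_def)
    qed simp
  next
    have "normx2 * R = (\<Sum>a\<le>(p - 2) div 2. \<Sum>b\<le>q div 2. normx2 ^ Suc a * normu2 ^ b * H a b)"
      using assms(2) by (simp add: fischer_decomp_def sum_distrib_left mult.assoc)
    also have "\<dots> = (\<Sum>a\<le>p div 2. \<Sum>b\<le>q div 2. normx2 ^ a * normu2 ^ b * (if a = 0 then 0 else H (a - 1) b))"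
      unfolding p by (subst sum.atMost_Suc_shift) simp
    finally show "normx2 * R = \<dots>" .
  qed
qed

lemma fischer_decomp_normu2_mult:
  assumes "2 \<le> q" "fischer_decomp p (q - 2) R H"
  shows "fischer_decomp p q (normu2 * R) (\<lambda>a b. if b = 0 then 0 else H a (b - 1))"
proof -
  have q: "q div 2 = Suc ((q - 2) div 2)"
    using assms(1) by presburger
  show ?thesis
    unfolding fischer_decomp_def
  proof (rule conjI, intro allI impI)
    fix a b
    assume a: "a \<le> p div 2" and b: "b \<le> q div 2"
    show "bihom (p - 2*a) (q - 2*b) (if b = 0 then 0 else H a (b - 1)) \<and>
          harmonic2 (if b = 0 then 0 else H a (b - 1))"
    proof (cases b)
      case (Suc b')
      with b q have "b' \<le> (q - 2) div 2" "q - 2 - 2*b' = q - 2*b"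
        by auto
      with Suc a assms(2) show ?thesis
        by (simp add: fischer_decomp_def)
    qed simp
  next
    have "normu2 * R = (\<Sum>a\<le>p div 2. \<Sum>b\<le>(q - 2) div 2. normx2 ^ a * normu2 ^ Suc b * H a b)"
      using assms(2) by (simp add: fischer_decomp_def sum_distrib_left mult_ac)
    also have "\<dots> = (\<Sum>a\<le>p div 2. \<Sum>b\<le>q div 2. normx2 ^ a * normu2 ^ b * (if b = 0 then 0 else H a (b - 1)))"
      unfolding q by (rule sum.cong[OF refl]) (subst sum.atMost_Suc_shift, simp)
    finally show "normu2 * R = \<dots>" .
  qed
qed

lemma fischer_decomp_exists:
  fixes P :: "'n::finite cpoly"
  assumes "bihom p q P"
  shows "\<exists>Hf. fischer_decomp p q P Hf"
  using assms
proof (induction "p + q" arbitrary: p q P rule: less_induct)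
  case less
  obtain r R1 R2 where P: "P = r + normx2 * R1 + normu2 * R2" and r: "bihom p q r" "harmonic2 r"
    and keys_R1: "\<forall>a\<in>keys R1. xdeg a + 2 = p \<and> udeg a = q"
    and keys_R2: "\<forall>a\<in>keys R2. xdeg a = p \<and> udeg a + 2 = q"
    using harmonic_projection[OF less.prems] by blast
  have "\<exists>H. fischer_decomp p q (normx2 * R1) H"
  proof (cases "2 \<le> p")
    case True
    with keys_R1 have "bihom (p - 2) q R1"
      by (auto simp: bihom_def)
    moreover from True have "p - 2 + q < p + q"
      by simp
    ultimately obtain H where "fischer_decomp (p - 2) q R1 H"
      using less.hyps by blast
    with True show ?thesis
      by (blast intro: fischer_decomp_normx2_mult)
  next
    case False
    with keys_R1 have "R1 = 0"
      by (auto simp flip: keys_eq_empty)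
    then show ?thesis
      using fischer_decomp_zero by auto
  qed
  moreover have "\<exists>H. fischer_decomp p q (normu2 * R2) H"
  proof (cases "2 \<le> q")
    case True
    with keys_R2 have "bihom p (q - 2) R2"
      by (auto simp: bihom_def)
    moreover from True have "p + (q - 2) < p + q"
      by simp
    ultimately obtain H where "fischer_decomp p (q - 2) R2 H"
      using less.hyps by blast
    with True show ?thesis
      by (blast intro: fischer_decomp_normu2_mult)
  next
    case False
    with keys_R2 have "R2 = 0"
      by (auto simp flip: keys_eq_empty)
    then show ?thesis
      using fischer_decomp_zero by auto
  qed
  ultimately show ?case
    unfolding P using fischer_decomp_harmonic[OF r] by (blast intro: fischer_decomp_add)
qed

text \<open>The harmonic part of a Fischer decomposition is unique: two candidates have the same
  Fischer product with every harmonic polynomial, in particular with their difference.\<close>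

lemma pis_hom_eq:
  assumes "fischer_decomp p q P Hf"
  shows "pis_hom p q P = Hf 0 0"
  unfolding pis_hom_def
proof (rule the_equality)
  show "\<exists>Hf'. (\<forall>a\<le>p div 2. \<forall>b\<le>q div 2. bihom (p - 2*a) (q - 2*b) (Hf' a b) \<and> harmonic2 (Hf' a b)) \<and>
      P = (\<Sum>a\<le>p div 2. \<Sum>b\<le>q div 2. normx2 ^ a * normu2 ^ b * Hf' a b) \<and> Hf 0 0 = Hf' 0 0"
    using assms unfolding fischer_decomp_def by blast
next
  fix H
  assume "\<exists>Hf'. (\<forall>a\<le>p div 2. \<forall>b\<le>q div 2. bihom (p - 2*a) (q - 2*b) (Hf' a b) \<and> harmonic2 (Hf' a b)) \<and>
      P = (\<Sum>a\<le>p div 2. \<Sum>b\<le>q div 2. normx2 ^ a * normu2 ^ b * Hf' a b) \<and> H = Hf' 0 0"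
  then obtain Hf' where Hf': "fischer_decomp p q P Hf'" and H: "H = Hf' 0 0"
    unfolding fischer_decomp_def by blast
  let ?D = "Hf' 0 0 - Hf 0 0"
  have D: "harmonic2 ?D"
    using assms Hf' by (intro harmonic2_diff) (auto simp: fischer_decomp_def)
  have P: "P = (\<Sum>a\<le>p div 2. \<Sum>b\<le>q div 2. normx2 ^ a * normu2 ^ b * Hf a b)"
    "P = (\<Sum>a\<le>p div 2. \<Sum>b\<le>q div 2. normx2 ^ a * normu2 ^ b * Hf' a b)"
    using assms Hf' unfolding fischer_decomp_def by blast+
  have "fischer (Hf 0 0) ?D = fischer P ?D" "fischer (Hf' 0 0) ?D = fischer P ?D"
    by (subst P(1), rule fischer_norm_powers_sum_harmonic[OF D, symmetric])
      (subst P(2), rule fischer_norm_powers_sum_harmonic[OF D, symmetric])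
  then have "fischer ?D ?D = 0"
    by (simp add: fischer_diff_left)
  with H show "H = Hf 0 0"
    by (simp add: fischer_self_eq_0_iff)
qed

lemma lookup_bicomp: "lookup (bicomp p q R) a = (if xdeg a = p \<and> udeg a = q then lookup R a else 0)"
  by (auto simp: bicomp_def lookup_sum lookup_single when_def in_keys_iff)

lemma bihom_bicomp: "bihom p q (bicomp p q R)"
  by (auto simp: bihom_def in_keys_iff lookup_bicomp split: if_splits)

lemma sum_bicomp: "(\<Sum>(p, q)\<in>(\<lambda>\<alpha>. (xdeg \<alpha>, udeg \<alpha>)) ` keys R. bicomp p q R) = R"
proof (rule poly_mapping_eqI)
  fix a
  let ?I = "(\<lambda>\<alpha>. (xdeg \<alpha>, udeg \<alpha>)) ` keys R"
  have "lookup (\<Sum>(p, q)\<in>?I. bicomp p q R) a = (\<Sum>x\<in>?I. if (xdeg a, udeg a) = x then lookup R a else 0)"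
    unfolding lookup_sum by (intro sum.cong refl) (auto simp: lookup_bicomp split: if_splits)
  also have "\<dots> = lookup R a"
    by (cases "a \<in> keys R") (auto simp: sum.delta' in_keys_iff)
  finally show "lookup (\<Sum>(p, q)\<in>?I. bicomp p q R) a = lookup R a" .
qed

lemma fischer_pis_left:
  assumes "harmonic2 Q"
  shows "fischer (pis R) Q = fischer R Q"
proof -
  have "fischer (pis_hom p q (bicomp p q R)) Q = fischer (bicomp p q R) Q" for p q
  proof -
    obtain Hf where Hf: "fischer_decomp p q (bicomp p q R) Hf"
      using fischer_decomp_exists[OF bihom_bicomp] by blast
    then have "bicomp p q R = (\<Sum>a\<le>p div 2. \<Sum>b\<le>q div 2. normx2 ^ a * normu2 ^ b * Hf a b)"
      by (simp add: fischer_decomp_def)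
    then have "fischer (bicomp p q R) Q = fischer (Hf 0 0) Q"
      by (simp only: fischer_norm_powers_sum_harmonic[OF assms])
    then show ?thesis
      by (simp only: pis_hom_eq[OF Hf])
  qed
  then have "fischer (pis R) Q = fischer (\<Sum>(p, q)\<in>(\<lambda>\<alpha>. (xdeg \<alpha>, udeg \<alpha>)) ` keys R. bicomp p q R) Q"
    by (simp add: pis_def fischer_sum_left case_prod_beta)
  then show ?thesis
    by (simp only: sum_bicomp)
qed

lemma fischer_pis_right: "harmonic2 P \<Longrightarrow> fischer P (pis R) = fischer P R"
  by (metis fischer_cnj fischer_pis_left)

section \<open>Adjoints\<close>

lemma fischer_C_op_left:
  assumes "harmonic2 P" "harmonic2 Q"
  shows "fischer (C_op P) Q = fischer P (A_op Q)"
proof -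
  have "(\<Sum>j\<in>UNIV. var (Inr j) * var (Inl j)) * P = (\<Sum>j\<in>UNIV. var (Inl j) * (var (Inr j) * P))"
    unfolding sum_distrib_right by (simp add: mult_ac)
  then show ?thesis
    unfolding C_op_def A_op_def fischer_pis_left[OF assms(2)] fischer_pis_right[OF assms(1)]
    by (simp add: fischer_sum_left fischer_sum_right fischer_var_mult_left)
qed

lemma fischer_S_u_left:
  assumes "harmonic2 P" "harmonic2 Q"
  shows "fischer (S_u P) Q = fischer P (S_x Q)"
  unfolding S_u_def S_x_def fischer_pis_left[OF assms(2)] fischer_pis_right[OF assms(1)]
  by (simp add: fischer_sum_left fischer_sum_right fischer_var_mult_left fischer_pder_right)

theorem proposition6p1:
  fixes P Q :: "'n::finite cpoly"
  assumes "card (UNIV :: 'n set) > 4"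
    and "harmonic2 P" and "harmonic2 Q"
  shows "fischer (C_op P) Q = fischer P (A_op Q) \<and>
         fischer (A_op P) Q = fischer P (C_op Q) \<and>
         fischer (S_u P) Q = fischer P (S_x Q) \<and>
         fischer (S_x P) Q = fischer P (S_u Q)"
proof (intro conjI)
  show "fischer (C_op P) Q = fischer P (A_op Q)"
    using assms(2,3) by (rule fischer_C_op_left)
  show "fischer (A_op P) Q = fischer P (C_op Q)"
    using fischer_C_op_left[OF assms(3,2)] by (metis fischer_cnj)
  show "fischer (S_u P) Q = fischer P (S_x Q)"
    using assms(2,3) by (rule fischer_S_u_left)
  show "fischer (S_x P) Q = fischer P (S_u Q)"
    using fischer_S_u_left[OF assms(3,2)] by (metis fischer_cnj)
qed

end
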